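(* For every graph $G$ on $[n]$, the ideal $I^{(2)}_G$ is contained in $I_G$. Moreover, suppose $I^{(2)}_G$ is prime, $I^{(2)}_G\cap\mathbb C[x]=\{0\}$ and $I^{(2)}_G\cap\mathbb C[s]=K_G$. Then $I^{(2)}_G=I_G$.
   Context: Setup. $G\subseteq\binom{[n]}{2}$ is a simple graph, and $G_i$ is the set of neighbours of $i$. We work in the polynomial ring $\mathbb C[s,x]$ with variables $s_{ij}$ ($ij\in G$) and $x_1,\dots,x_n$. $K_G$ denotes the ideal generated by the linear forms $\sum_{j\in G_i}s_{ij}$ for $i\in[n]$ (considered in $\mathbb C[s]$ or in $\mathbb C[s,x]$ as appropriate). $L_G=\sum_{ij\in G}s_{ij}\log(x_i-x_j)$, so $\partial L_G/\partial x_i=\sum_{j\in G_i}s_{ij}/(x_i-x_j)$. The ideals $I^{(0)}_G$ and $I_G$. $I^{(0)}_G$ is generated by $K_G$ and by $\prod_{j\in G_i}(x_i-x_j)\cdot\partial L_G/\partial x_i$ for $i\in[n]$. Then $$I_G=\{f\in\mathbb C[s,x]: abf\in I^{(0)}_G\ \text{for some nonzero } a\in\mathbb C[x]\ \text{and some } b\in\mathbb C[s]\setminus K_G\}.$$ The ideal $I^{(1)}_G$. It is generated by $I^{(0)}_G$ and by $\theta_k=\sum_{ij\in G}s_{ij}\sum_{\ell=0}^k x_i^{k-\ell}x_j^\ell$ for $k=2,\dots,n-2$. Separators and the ideal $I^{(2)}_G$. A subset $T\subset[n]$ is a separator of $G$ if the induced subgraph of $G$ on $[n]\setminus T$ has more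 connected components than $G$. For a separator $T$ and a connected component $C$ of $G\setminus T$, define $f_i(x)=\prod_{t\in T}(x_i-x_t)$ if $i\in C$ and $f_i=0$ otherwise. The expression $\sum_{i=1}^n f_i\,\partial L_G/\partial x_i$ is then a polynomial in $\mathbb C[s,x]$ (a separator-based derivation polynomial). $I^{(2)}_G$ is the ideal generated by $I^{(1)}_G$ together with all separator-based derivation polynomials, over all pairs $(T,C)$. *)

theory Defs
  imports Complex_Main "HOL-Library.Poly_Mapping" "HOL-Library.Product_Lexorder"
begin

text \<open>Variables: x_i (XV i) and s_ij (SV i j, used only for edges (i,j) with i < j).\<close>
datatype var = XV nat | SV nat nat

fun var_enc :: "var \<Rightarrow> nat \<times> nat \<times> nat" where
  "var_enc (XV i) = (0, i, 0)"
| "var_enc (SV i j) = (1, i, j)"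

lemma var_enc_inj: "var_enc a = var_enc b \<Longrightarrow> a = b"
  by (cases a; cases b) auto

instantiation var :: linorder
begin
definition less_eq_var :: "var \<Rightarrow> var \<Rightarrow> bool" where "less_eq_var a b \<longleftrightarrow> var_enc a \<le> var_enc b"
definition less_var :: "var \<Rightarrow> var \<Rightarrow> bool" where "less_var a b \<longleftrightarrow> var_enc a < var_enc b"
instance
  by intro_classes (auto simp: less_eq_var_def less_var_def var_enc_inj)
end

type_synonym mpoly = "(var \<Rightarrow>\<^sub>0 nat) \<Rightarrow>\<^sub>0 complex"

definition Var :: "var \<Rightarrow> mpoly" where
  "Var v = Poly_Mapping.single (Poly_Mapping.single v 1) 1"

definition xv :: "nat \<Rightarrow> mpoly" where "xv i = Var (XV i)"

definition Cx :: "mpoly set" where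
  "Cx = {p::mpoly. \<forall>m\<in>Poly_Mapping.keys p. \<forall>v\<in>Poly_Mapping.keys m. \<exists>i. v = XV i}"

definition Cs :: "mpoly set" where
  "Cs = {p::mpoly. \<forall>m\<in>Poly_Mapping.keys p. \<forall>v\<in>Poly_Mapping.keys m. \<exists>i j. v = SV i j}"

definition ideal_gen :: "mpoly set \<Rightarrow> mpoly set \<Rightarrow> mpoly set" where
  "ideal_gen R S = {f. \<exists>F c. finite F \<and> F \<subseteq> S \<and> (\<forall>g\<in>F. c g \<in> R) \<and> f = (\<Sum>g\<in>F. c g * g)}"

definition prime_ideal :: "mpoly set \<Rightarrow> bool" where
  "prime_ideal I \<longleftrightarrow> I \<noteq> UNIV \<and> (\<forall>a b. a * b \<in> I \<longrightarrow> a \<in> I \<or> b \<in> I)"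

definition graph_on :: "nat \<Rightarrow> (nat \<times> nat) set \<Rightarrow> bool" where
  "graph_on n G \<longleftrightarrow> (\<forall>(i,j)\<in>G. 1 \<le> i \<and> i < j \<and> j \<le> n)"

definition nbrs :: "(nat \<times> nat) set \<Rightarrow> nat \<Rightarrow> nat set" where
  "nbrs G i = {j. (i,j) \<in> G \<or> (j,i) \<in> G}"

definition sv :: "nat \<Rightarrow> nat \<Rightarrow> mpoly" where
  "sv i j = Var (SV (min i j) (max i j))"

definition Kgens :: "nat \<Rightarrow> (nat \<times> nat) set \<Rightarrow> mpoly set" where
  "Kgens n G = {(\<Sum>j\<in>nbrs G i. sv i j) | i. i \<in> {1..n}}"

definition K_G :: "nat \<Rightarrow> (nat \<times> nat) set \<Rightarrow> mpoly set" where
  "K_G n G = ideal_gen Cs (Kgens n G)"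

definition edge_fac :: "nat \<times> nat \<Rightarrow> mpoly" where
  "edge_fac e = xv (fst e) - xv (snd e)"

definition denomG :: "(nat \<times> nat) set \<Rightarrow> mpoly" where
  "denomG G = (\<Prod>e\<in>G. edge_fac e)"

text \<open>D * dL/dx_i = sum_{j in G_i} s_ij * D/(x_i - x_j), as a polynomial.\<close>
definition dL_num :: "(nat \<times> nat) set \<Rightarrow> nat \<Rightarrow> mpoly" where
  "dL_num G i = (\<Sum>j\<in>nbrs G i. sv i j * (if i < j then 1 else -1) *
                   (\<Prod>e\<in>G - {(min i j, max i j)}. edge_fac e))"

text \<open>The polynomial equal to sum_i f_i dL/dx_i (assuming it is a polynomial):
  the unique p with p * D = sum_i f_i * (D * dL/dx_i).\<close>
definition deriv_poly :: "nat \<Rightarrow> (nat \<times> nat) set \<Rightarrow> (nat \<Rightarrow> mpoly) \<Rightarrow> mpoly" where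
  "deriv_poly n G f = (THE p. p * denomG G = (\<Sum>i\<in>{1..n}. f i * dL_num G i))"

definition I0 :: "nat \<Rightarrow> (nat \<times> nat) set \<Rightarrow> mpoly set" where
  "I0 n G = ideal_gen UNIV (Kgens n G \<union>
     {deriv_poly n G (\<lambda>k. if k = i then (\<Prod>j\<in>nbrs G i. xv i - xv j) else 0) | i. i \<in> {1..n}})"

definition I_G :: "nat \<Rightarrow> (nat \<times> nat) set \<Rightarrow> mpoly set" where
  "I_G n G = {f. \<exists>a b. a \<in> Cx \<and> a \<noteq> 0 \<and> b \<in> Cs \<and> b \<notin> K_G n G \<and> a * b * f \<in> I0 n G}"

definition theta :: "(nat \<times> nat) set \<Rightarrow> nat \<Rightarrow> mpoly" where
  "theta G k = (\<Sum>(i,j)\<in>G. sv i j * (\<Sum>l\<in>{0..k}. xv i ^ (k - l) * xv j ^ l))"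

definition I1 :: "nat \<Rightarrow> (nat \<times> nat) set \<Rightarrow> mpoly set" where
  "I1 n G = ideal_gen UNIV (I0 n G \<union> {theta G k | k. 2 \<le> k \<and> k \<le> n - 2})"

definition adj_in :: "(nat \<times> nat) set \<Rightarrow> nat set \<Rightarrow> nat \<Rightarrow> nat \<Rightarrow> bool" where
  "adj_in G V i j \<longleftrightarrow> i \<in> V \<and> j \<in> V \<and> ((i,j) \<in> G \<or> (j,i) \<in> G)"

definition components :: "(nat \<times> nat) set \<Rightarrow> nat set \<Rightarrow> nat set set" where
  "components G V = {{j \<in> V. (adj_in G V)\<^sup>*\<^sup>* i j} | i. i \<in> V}"

definition separator :: "nat \<Rightarrow> (nat \<times> nat) set \<Rightarrow> nat set \<Rightarrow> bool" where
  "separator n G T \<longleftrightarrow> T \<subseteq> {1..n} \<and>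
     card (components G ({1..n} - T)) > card (components G {1..n})"

definition sep_fun :: "nat set \<Rightarrow> nat set \<Rightarrow> nat \<Rightarrow> mpoly" where
  "sep_fun T C i = (if i \<in> C then (\<Prod>t\<in>T. xv i - xv t) else 0)"

definition I2 :: "nat \<Rightarrow> (nat \<times> nat) set \<Rightarrow> mpoly set" where
  "I2 n G = ideal_gen UNIV (I1 n G \<union>
     {deriv_poly n G (sep_fun T C) | T C. separator n G T \<and> C \<in> components G ({1..n} - T)})"

end

theory Submission
  imports Defs
begin

text \<open>
  Each generator of I2 has the form p = \<Sum>_i f_i \<partial>L_G/\<partial>x_i, where x_a - x_b divides f_a - f_b
  for every edge ab: \<theta>_k comes from f_i = x_i^(k+1) and the separator polynomials from
  f = sep_fun T C.  Let D be the product of x_a - x_b over all edges.  Multiplying D \<partial>L_G/\<partial>x_i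
  by \<Prod>_(j \<in> G_i) (x_i - x_j) gives D times the i-th generator of I0, so the nonzero
  a = D \<Prod>_i \<Prod>_(j \<in> G_i) (x_i - x_j) of \<complex>[x] satisfies a p \<in> I0.  As {h. a h \<in> I0} is an
  ideal, a I2 \<subseteq> I0, and b = 1 \<notin> K_G turns this into I2 \<subseteq> I_G.  Conversely, if a b f \<in> I0 \<subseteq> I2
  with 0 \<noteq> a \<in> \<complex>[x] and b \<in> \<complex>[s] - K_G, the intersection hypotheses give a, b \<notin> I2, and
  primality gives f \<in> I2.
\<close>

interpretation ring_module: module "(*) :: 'a::comm_ring_1 \<Rightarrow> 'a \<Rightarrow> 'a"
  by standard (simp_all add: algebra_simps)

declare ring_module.scale_scale [simp del] \<comment> \<open>it is \<open>mult.assoc\<close> reversed and loops with it\<close>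

lemma ideal_gen_UNIV_eq_span: "ideal_gen UNIV S = ring_module.span S"
  unfolding ideal_gen_def ring_module.span_explicit by blast

lemma subspace_colon:
  assumes J: "ring_module.subspace J"
  shows "ring_module.subspace {h. a * h \<in> J}"
  unfolding ring_module.subspace_def mem_Collect_eq Ball_def
proof (intro conjI allI impI)
  show "a * 0 \<in> J" using ring_module.subspace_0[OF J] by simp
  show "a * (h + k) \<in> J" if "a * h \<in> J" "a * k \<in> J" for h k
    using ring_module.subspace_add[OF J that] by (simp add: distrib_left)
  show "a * (c * h) \<in> J" if "a * h \<in> J" for c h
    using ring_module.subspace_scale[OF J that, of c] by (simp only: mult.left_commute)
qed

lemma graph_on_edgeD: "graph_on n G \<Longrightarrow> (a, b) \<in> G \<Longrightarrow> 1 \<le> a \<and> a < b \<and> b \<le> n"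
  unfolding graph_on_def by auto

lemma graph_on_finite: "graph_on n G \<Longrightarrow> finite G"
  unfolding graph_on_def by (rule finite_subset[of _ "{1..n} \<times> {1..n}"]) auto

lemma finite_nbrs: "finite G \<Longrightarrow> finite (nbrs G i)"
  unfolding nbrs_def by (rule finite_subset[of _ "snd ` G \<union> fst ` G"]) force+

lemma nbrs_not_self: "graph_on n G \<Longrightarrow> j \<in> nbrs G i \<Longrightarrow> j \<noteq> i"
  unfolding graph_on_def nbrs_def by auto

lemma sv_commute: "sv i j = sv j i"
  unfolding sv_def by (simp add: min.commute max.commute)

lemma xv_diff_neq_zero:
  assumes "i \<noteq> j"
  shows "xv i - xv j \<noteq> 0"
proof
  let ?m = "Poly_Mapping.single (XV i) (1::nat)"
  assume "xv i - xv j = 0"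
  then have "Poly_Mapping.lookup (xv i) ?m = Poly_Mapping.lookup (xv j) ?m" by simp
  moreover have "Poly_Mapping.single (XV j) (1::nat) \<noteq> ?m"
    using assms by (metis lookup_single_eq lookup_single_not_eq one_neq_zero var.inject(1))
  ultimately show False by (simp add: xv_def Var_def lookup_single)
qed

lemma denomG_neq_zero: "graph_on n G \<Longrightarrow> denomG G \<noteq> 0"
  unfolding denomG_def edge_fac_def
  using graph_on_finite xv_diff_neq_zero by (force simp: graph_on_def)

lemma denomG_remove: "finite G \<Longrightarrow> e \<in> G \<Longrightarrow> denomG G = edge_fac e * (\<Prod>e'\<in>G - {e}. edge_fac e')"
  unfolding denomG_def by (rule prod.remove)

definition nbr_prod :: "(nat \<times> nat) set \<Rightarrow> nat \<Rightarrow> mpoly" where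
  "nbr_prod G i = (\<Prod>j\<in>nbrs G i. xv i - xv j)"

lemma nbr_prod_neq_zero:
  assumes "graph_on n G"
  shows "nbr_prod G i \<noteq> 0"
proof -
  have "finite (nbrs G i)" using assms by (intro finite_nbrs graph_on_finite)
  moreover have "xv i - xv j \<noteq> 0" if "j \<in> nbrs G i" for j
    using nbrs_not_self[OF assms that] by (intro xv_diff_neq_zero) simp
  ultimately show ?thesis unfolding nbr_prod_def by simp
qed

lemma sum_mult_dL_num_eq_edge_sum:
  assumes g: "graph_on n G"
  shows "(\<Sum>i\<in>{1..n}. f i * dL_num G i) =
    (\<Sum>e\<in>G. sv (fst e) (snd e) * (f (fst e) - f (snd e)) * (\<Prod>e'\<in>G - {e}. edge_fac e'))"
proof -
  define t where "t = (\<lambda>(i, j). f i * (sv i j * (if i < j then 1 else -1) *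
     (\<Prod>e\<in>G - {(min i j, max i j)}. edge_fac e)))"
  have fin: "finite G" using g by (rule graph_on_finite)
  have "(\<Sum>i\<in>{1..n}. f i * dL_num G i) = (\<Sum>i\<in>{1..n}. \<Sum>j\<in>nbrs G i. t (i, j))"
    unfolding dL_num_def t_def by (simp add: sum_distrib_left)
  also have "\<dots> = (\<Sum>p\<in>Sigma {1..n} (nbrs G). t p)"
    by (subst sum.Sigma) (auto intro: finite_nbrs fin)
  also have "Sigma {1..n} (nbrs G) = G \<union> prod.swap ` G"
    using g unfolding graph_on_def nbrs_def by force
  also have "(\<Sum>p\<in>G \<union> prod.swap ` G. t p) = (\<Sum>p\<in>G. t p) + (\<Sum>p\<in>prod.swap ` G. t p)"
    by (rule sum.union_disjoint)
      (use fin g in \<open>auto dest: graph_on_edgeD\<close>, metis graph_on_edgeD less_asym)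
  also have "(\<Sum>p\<in>prod.swap ` G. t p) = (\<Sum>p\<in>G. t (prod.swap p))"
    by (subst sum.reindex) (auto simp: inj_on_def)
  also have "(\<Sum>p\<in>G. t p) + (\<Sum>p\<in>G. t (prod.swap p)) = (\<Sum>p\<in>G. t p + t (prod.swap p))"
    by (simp add: sum.distrib)
  also have "\<dots> = (\<Sum>e\<in>G. sv (fst e) (snd e) * (f (fst e) - f (snd e)) * (\<Prod>e'\<in>G - {e}. edge_fac e'))"
  proof (rule sum.cong)
    fix e assume "e \<in> G"
    then obtain a b where "e = (a, b)" "a < b" using g unfolding graph_on_def by force
    then show "t e + t (prod.swap e) =
        sv (fst e) (snd e) * (f (fst e) - f (snd e)) * (\<Prod>e'\<in>G - {e}. edge_fac e')"
      unfolding t_def by (simp add: sv_commute[of b a] algebra_simps)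
  qed simp
  finally show ?thesis .
qed

lemma deriv_poly_eqI:
  assumes "graph_on n G" and "p * denomG G = (\<Sum>i\<in>{1..n}. f i * dL_num G i)"
  shows "deriv_poly n G f = p"
  unfolding deriv_poly_def
proof (rule the_equality)
  fix p' assume "p' * denomG G = (\<Sum>i\<in>{1..n}. f i * dL_num G i)"
  with assms(2) have "p' * denomG G = p * denomG G" by simp
  then show "p' = p" using denomG_neq_zero[OF assms(1)] by simp
qed (fact assms(2))

text \<open>Divisibility of f_a - f_b by x_a - x_b along the edges is what makes
  \<Sum>_i f_i \<partial>L_G/\<partial>x_i a polynomial.\<close>
definition edge_divisible :: "(nat \<times> nat) set \<Rightarrow> (nat \<Rightarrow> mpoly) \<Rightarrow> bool" where
  "edge_divisible G f \<longleftrightarrow> (\<forall>(a, b)\<in>G. edge_fac (a, b) dvd f a - f b)"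

lemma deriv_poly_mult_denomG:
  assumes g: "graph_on n G" and f: "edge_divisible G f"
  shows "deriv_poly n G f * denomG G = (\<Sum>i\<in>{1..n}. f i * dL_num G i)"
proof -
  have "\<forall>e\<in>G. \<exists>q. f (fst e) - f (snd e) = edge_fac e * q"
    using f unfolding edge_divisible_def dvd_def by auto
  then obtain q where q: "\<And>e. e \<in> G \<Longrightarrow> f (fst e) - f (snd e) = edge_fac e * q e"
    by metis
  have "(\<Sum>i\<in>{1..n}. f i * dL_num G i) = (\<Sum>e\<in>G. sv (fst e) (snd e) * q e) * denomG G"
    unfolding sum_mult_dL_num_eq_edge_sum[OF g] sum_distrib_right
  proof (rule sum.cong)
    fix e assume e: "e \<in> G"
    show "sv (fst e) (snd e) * (f (fst e) - f (snd e)) * (\<Prod>e'\<in>G - {e}. edge_fac e') =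
        sv (fst e) (snd e) * q e * denomG G"
      unfolding q[OF e] denomG_remove[OF graph_on_finite[OF g] e] by (simp add: mult_ac)
  qed simp
  moreover from this have "deriv_poly n G f = (\<Sum>e\<in>G. sv (fst e) (snd e) * q e)"
    by (intro deriv_poly_eqI[OF g]) simp
  ultimately show ?thesis by simp
qed

lemma edge_divisible_nbr_prod:
  assumes "finite G"
  shows "edge_divisible G (\<lambda>k. if k = i then nbr_prod G i else 0)"
  unfolding edge_divisible_def
proof (intro ballI, clarify)
  fix a b assume ab: "(a, b) \<in> G"
  have dvd: "xv i - xv j dvd nbr_prod G i" if "j \<in> nbrs G i" for j
    unfolding nbr_prod_def using finite_nbrs[OF assms] that by (rule dvd_prodI)
  consider "a = i" | "b = i" "a \<noteq> i" | "a \<noteq> i" "b \<noteq> i" by blast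
  then show "edge_fac (a, b) dvd
      (if a = i then nbr_prod G i else 0) - (if b = i then nbr_prod G i else 0)"
  proof cases
    case 1
    then show ?thesis using dvd[of b] ab by (auto simp: nbrs_def edge_fac_def)
  next
    case 2
    then have "xv i - xv a dvd nbr_prod G i" using dvd[of a] ab by (simp add: nbrs_def)
    then have "xv a - xv i dvd nbr_prod G i" by (metis minus_diff_eq minus_dvd_iff)
    then show ?thesis using 2 by (simp add: edge_fac_def)
  qed simp
qed

lemma nbr_prod_mult_dL_num_in_I0:
  assumes g: "graph_on n G" and i: "i \<in> {1..n}"
  shows "nbr_prod G i * dL_num G i \<in> I0 n G"
proof -
  let ?f = "\<lambda>k. if k = i then nbr_prod G i else 0"
  have "nbr_prod G i * dL_num G i = (\<Sum>k\<in>{1..n}. ?f k * dL_num G k)"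
    using i by (simp add: if_distrib[of "\<lambda>x. x * _"] cong: if_cong)
  also have "\<dots> = denomG G * deriv_poly n G ?f"
    using deriv_poly_mult_denomG[OF g edge_divisible_nbr_prod[OF graph_on_finite[OF g]]]
    by (simp add: mult.commute)
  also have "\<dots> \<in> I0 n G"
    unfolding I0_def ideal_gen_UNIV_eq_span nbr_prod_def using i
    by (intro ring_module.span_scale ring_module.span_base) blast
  finally show ?thesis .
qed

definition all_nbr_prod :: "nat \<Rightarrow> (nat \<times> nat) set \<Rightarrow> mpoly" where
  "all_nbr_prod n G = (\<Prod>i\<in>{1..n}. nbr_prod G i)"

lemma all_nbr_prod_mult_sum_dL_num_in_I0:
  assumes "graph_on n G"
  shows "all_nbr_prod n G * (\<Sum>i\<in>{1..n}. f i * dL_num G i) \<in> I0 n G"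
proof -
  have "all_nbr_prod n G * (f i * dL_num G i) \<in> I0 n G" if i: "i \<in> {1..n}" for i
  proof -
    obtain r where "all_nbr_prod n G = nbr_prod G i * r"
      unfolding all_nbr_prod_def using i by (metis dvd_prodI finite_atLeastAtMost dvdE)
    then have "all_nbr_prod n G * (f i * dL_num G i) = (r * f i) * (nbr_prod G i * dL_num G i)"
      by (simp add: mult_ac)
    also have "\<dots> \<in> I0 n G"
      using nbr_prod_mult_dL_num_in_I0[OF assms i]
      unfolding I0_def ideal_gen_UNIV_eq_span by (rule ring_module.span_scale)
    finally show ?thesis .
  qed
  then show ?thesis
    unfolding sum_distrib_left I0_def ideal_gen_UNIV_eq_span by (rule ring_module.span_sum)
qed

lemma diff_mult_sum_powers:
  fixes x y :: "'a::comm_ring_1"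
  shows "(x - y) * (\<Sum>l\<in>{0..k}. x ^ (k - l) * y ^ l) = x ^ Suc k - y ^ Suc k"
proof -
  have "(\<Sum>l\<in>{0..k}. x ^ (k - l) * y ^ l) = (\<Sum>p<Suc k. x ^ p * y ^ (k - p))"
    by (rule sum.reindex_bij_witness[of _ "\<lambda>p. k - p" "\<lambda>l. k - l"]) auto
  then show ?thesis by (simp only: diff_power_eq_sum)
qed

lemma theta_mult_denomG:
  assumes g: "graph_on n G"
  shows "theta G k * denomG G = (\<Sum>i\<in>{1..n}. xv i ^ Suc k * dL_num G i)"
  unfolding sum_mult_dL_num_eq_edge_sum[OF g] theta_def sum_distrib_right
proof (rule sum.cong)
  fix e assume e: "e \<in> G"
  obtain a b where ab: "e = (a, b)" by force
  let ?S = "\<Sum>l\<in>{0..k}. xv a ^ (k - l) * xv b ^ l" and ?P = "\<Prod>e'\<in>G - {e}. edge_fac e'"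
  have "sv a b * ?S * denomG G = sv a b * ((xv a - xv b) * ?S) * ?P"
    unfolding denomG_remove[OF graph_on_finite[OF g] e] by (simp add: ab edge_fac_def mult_ac)
  also have "\<dots> = sv a b * (xv a ^ Suc k - xv b ^ Suc k) * ?P"
    by (simp only: diff_mult_sum_powers)
  finally show "(case e of (i, j) \<Rightarrow> sv i j * (\<Sum>l\<in>{0..k}. xv i ^ (k - l) * xv j ^ l)) * denomG G =
      sv (fst e) (snd e) * (xv (fst e) ^ Suc k - xv (snd e) ^ Suc k) * ?P"
    by (simp add: ab)
qed simp

lemma diff_dvd_prod_diff:
  fixes u v :: "'a::comm_ring_1"
  assumes "finite T"
  shows "u - v dvd (\<Prod>t\<in>T. u - w t) - (\<Prod>t\<in>T. v - w t)"
  using assms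
proof (induction T rule: finite_induct)
  case (insert t T)
  let ?A = "\<Prod>t\<in>T. u - w t" and ?B = "\<Prod>t\<in>T. v - w t"
  have "(\<Prod>t\<in>insert t T. u - w t) - (\<Prod>t\<in>insert t T. v - w t) =
      (u - w t) * (?A - ?B) + (u - v) * ?B"
    using insert by (simp add: algebra_simps)
  then show ?case using insert by (simp add: dvd_add)
qed simp

text \<open>An edge leaving the component C of G - T ends in T, so the edge factor is one of
  the factors of \<Prod>_(t \<in> T) (x_i - x_t).\<close>
lemma edge_divisible_sep_fun:
  assumes g: "graph_on n G" and T: "T \<subseteq> {1..n}" and C: "C \<in> components G ({1..n} - T)"
  shows "edge_divisible G (sep_fun T C)"
  unfolding edge_divisible_def
proof (intro ballI, clarify)
  fix a b assume ab: "(a, b) \<in> G"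
  define V where "V = {1..n} - T"
  obtain i0 where C_eq: "C = {j \<in> V. (adj_in G V)\<^sup>*\<^sup>* i0 j}"
    using C unfolding components_def V_def by auto
  have finT: "finite T" using T finite_subset by blast
  have abn: "a \<in> {1..n}" "b \<in> {1..n}" using graph_on_edgeD[OF g ab] by auto
  have closed: "y \<in> C \<or> y \<in> T" if "x \<in> C" "y \<in> {1..n}" "(x, y) \<in> G \<or> (y, x) \<in> G" for x y
  proof (cases "y \<in> T")
    case False
    then have "adj_in G V x y" using that C_eq unfolding adj_in_def V_def by auto
    then show ?thesis using that False C_eq V_def by (auto intro: rtranclp.rtrancl_into_rtrancl)
  qed simp
  have factor: "xv i - xv j dvd (\<Prod>t\<in>T. xv i - xv t)" if "j \<in> T" for i j
    using finT that by (rule dvd_prodI)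
  consider "a \<in> C" "b \<in> C" | "a \<in> C" "b \<notin> C" | "a \<notin> C" "b \<in> C" | "a \<notin> C" "b \<notin> C"
    by blast
  then show "edge_fac (a, b) dvd sep_fun T C a - sep_fun T C b"
  proof cases
    case 1
    then show ?thesis using diff_dvd_prod_diff[OF finT, of "xv a" "xv b" xv]
      by (simp add: sep_fun_def edge_fac_def)
  next
    case 2
    then have "b \<in> T" using closed[of a b] abn ab by blast
    then show ?thesis using 2 factor[of b a] by (simp add: sep_fun_def edge_fac_def)
  next
    case 3
    then have "a \<in> T" using closed[of b a] abn ab by blast
    then have "xv a - xv b dvd (\<Prod>t\<in>T. xv b - xv t)"
      using factor[of a b] by (metis minus_diff_eq minus_dvd_iff)
    then show ?thesis using 3 by (simp add: sep_fun_def edge_fac_def)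
  qed (simp add: sep_fun_def)
qed

lemma all_nbr_prod_denomG_mult_in_I0:
  assumes g: "graph_on n G" and p: "p * denomG G = (\<Sum>i\<in>{1..n}. f i * dL_num G i)"
  shows "all_nbr_prod n G * denomG G * p \<in> I0 n G"
proof -
  have "all_nbr_prod n G * denomG G * p = all_nbr_prod n G * (\<Sum>i\<in>{1..n}. f i * dL_num G i)"
    unfolding p[symmetric] by (simp only: mult_ac)
  with all_nbr_prod_mult_sum_dL_num_in_I0[OF g, of f] show ?thesis by (simp only:)
qed

lemma I2_subset_colon_I0:
  assumes g: "graph_on n G"
  shows "I2 n G \<subseteq> {h. all_nbr_prod n G * denomG G * h \<in> I0 n G}" (is "_ \<subseteq> ?J")
proof -
  have J: "ring_module.subspace ?J"
    unfolding I0_def ideal_gen_UNIV_eq_span by (rule subspace_colon) simp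
  have "I0 n G \<subseteq> ?J"
    unfolding I0_def ideal_gen_UNIV_eq_span by (auto intro: ring_module.span_scale)
  moreover have "theta G k \<in> ?J" for k
    using all_nbr_prod_denomG_mult_in_I0[OF g theta_mult_denomG[OF g]] by simp
  ultimately have "I1 n G \<subseteq> ?J"
    unfolding I1_def ideal_gen_UNIV_eq_span using J by (intro ring_module.span_minimal) auto
  moreover have "deriv_poly n G (sep_fun T C) \<in> ?J"
    if "separator n G T" "C \<in> components G ({1..n} - T)" for T C
  proof -
    have "T \<subseteq> {1..n}" using that(1) unfolding separator_def by blast
    from edge_divisible_sep_fun[OF g this that(2)] show ?thesis
      using all_nbr_prod_denomG_mult_in_I0[OF g deriv_poly_mult_denomG[OF g]] by simp
  qed
  ultimately show ?thesis
    unfolding I2_def ideal_gen_UNIV_eq_span using J by (intro ring_module.span_minimal) auto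
qed

lemma Cx_mult:
  assumes p: "p \<in> Cx" and q: "q \<in> Cx"
  shows "p * q \<in> Cx"
proof -
  have "\<exists>i. v = XV i" if m: "m \<in> Poly_Mapping.keys (p * q)" and v: "v \<in> Poly_Mapping.keys m" for m v
  proof -
    obtain a b where ab: "m = a + b" "a \<in> Poly_Mapping.keys p" "b \<in> Poly_Mapping.keys q"
      using keys_mult[of p q] m by blast
    have "v \<in> Poly_Mapping.keys a \<union> Poly_Mapping.keys b"
      using keys_add[of a b] v ab(1) by blast
    then show ?thesis using p q ab unfolding Cx_def by blast
  qed
  then show ?thesis unfolding Cx_def by blast
qed

lemma Cx_diff: "p \<in> Cx \<Longrightarrow> q \<in> Cx \<Longrightarrow> p - q \<in> Cx"
  using keys_diff[of p q] unfolding Cx_def by blast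

lemma Cx_prod: "(\<And>x. x \<in> A \<Longrightarrow> h x \<in> Cx) \<Longrightarrow> prod h A \<in> Cx"
proof (induction A rule: infinite_finite_induct)
  case (infinite A)
  then show ?case by (simp add: Cx_def)
next
  case empty
  then show ?case by (simp add: Cx_def)
next
  case (insert x A)
  then show ?case by (simp add: Cx_mult)
qed

lemma xv_in_Cx: "xv i \<in> Cx"
  unfolding Cx_def xv_def Var_def by simp

lemma zero_notin_keys_mult:
  fixes p q :: mpoly
  assumes "0 \<notin> Poly_Mapping.keys q"
  shows "0 \<notin> Poly_Mapping.keys (p * q)"
proof
  assume "0 \<in> Poly_Mapping.keys (p * q)"
  then obtain a b where "0 = a + b" "b \<in> Poly_Mapping.keys q"
    using keys_mult by blast
  moreover from \<open>0 = a + b\<close> have "b = 0"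
    by (metis add_eq_0_iff_both_eq_0 zero_le plus_poly_mapping.rep_eq lookup_zero poly_mapping_eqI)
  ultimately show False using assms by simp
qed

lemma zero_notin_keys_ideal_gen:
  assumes S: "\<And>g. g \<in> S \<Longrightarrow> 0 \<notin> Poly_Mapping.keys g" and f: "f \<in> ideal_gen R S"
  shows "0 \<notin> Poly_Mapping.keys f"
proof -
  obtain F c where F: "F \<subseteq> S" "f = (\<Sum>g\<in>F. c g * g)"
    using f unfolding ideal_gen_def by auto
  have "Poly_Mapping.keys f \<subseteq> (\<Union>g\<in>F. Poly_Mapping.keys (c g * g))"
    unfolding F(2) by (rule keys_sum)
  then show ?thesis using F(1) S zero_notin_keys_mult by blast
qed

lemma one_notin_K_G: "1 \<notin> K_G n G"
proof
  have "0 \<notin> Poly_Mapping.keys g" if gK: "g \<in> Kgens n G" for g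
  proof -
    obtain i where g: "g = (\<Sum>j\<in>nbrs G i. sv i j)" using gK unfolding Kgens_def by auto
    have "Poly_Mapping.keys g \<subseteq> (\<Union>j\<in>nbrs G i. Poly_Mapping.keys (sv i j))"
      unfolding g by (rule keys_sum)
    moreover have "0 \<notin> Poly_Mapping.keys (sv i j)" for j
    proof -
      have "Poly_Mapping.single v (1::nat) \<noteq> 0" for v :: var
        by (metis lookup_single_eq lookup_zero one_neq_zero)
      then show ?thesis by (simp add: sv_def Var_def)
    qed
    ultimately show ?thesis by blast
  qed
  moreover assume "1 \<in> K_G n G"
  ultimately have "0 \<notin> Poly_Mapping.keys (1::mpoly)"
    unfolding K_G_def by (rule zero_notin_keys_ideal_gen)
  then show False by simp
qed

lemma I_G_memI:
  assumes "a \<in> Cx" "a \<noteq> 0" "a * f \<in> I0 n G"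
  shows "f \<in> I_G n G"
  unfolding I_G_def using assms one_notin_K_G[of n G]
  by (intro CollectI exI[of _ a] exI[of _ 1]) (simp add: Cs_def)

lemma I2_subset_I_G:
  assumes g: "graph_on n G"
  shows "I2 n G \<subseteq> I_G n G"
proof
  fix h assume h: "h \<in> I2 n G"
  have "all_nbr_prod n G * denomG G \<in> Cx"
    unfolding all_nbr_prod_def nbr_prod_def denomG_def edge_fac_def
    by (intro Cx_mult Cx_prod Cx_diff xv_in_Cx)
  moreover have "all_nbr_prod n G * denomG G \<noteq> 0"
    unfolding all_nbr_prod_def using nbr_prod_neq_zero[OF g] denomG_neq_zero[OF g] by simp
  moreover have "all_nbr_prod n G * denomG G * h \<in> I0 n G"
    using I2_subset_colon_I0[OF g] h by blast
  ultimately show "h \<in> I_G n G" by (rule I_G_memI)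
qed

lemma I_G_subset_prime_ideal:
  assumes P: "prime_ideal P" and I0: "I0 n G \<subseteq> P"
    and Cx: "P \<inter> Cx = {0}" and Cs: "P \<inter> Cs \<subseteq> K_G n G"
  shows "I_G n G \<subseteq> P"
proof
  fix f assume "f \<in> I_G n G"
  then obtain a b where ab: "a \<in> Cx" "a \<noteq> 0" "b \<in> Cs" "b \<notin> K_G n G" "a * b * f \<in> I0 n G"
    unfolding I_G_def by blast
  moreover have "a \<notin> P" "b \<notin> P" using ab Cx Cs by blast+
  ultimately show "f \<in> P" using P I0 unfolding prime_ideal_def by blast
qed

lemma I0_subset_I2: "I0 n G \<subseteq> I2 n G"
  unfolding I2_def I1_def ideal_gen_UNIV_eq_span
  by (intro subset_trans[OF _ ring_module.span_superset]) (auto intro: ring_module.span_base)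

theorem mainTheorem11:
  fixes n :: nat and G :: "(nat \<times> nat) set"
  assumes "graph_on n G"
  shows "I2 n G \<subseteq> I_G n G \<and>
         (prime_ideal (I2 n G) \<and> I2 n G \<inter> Cx = {0} \<and> I2 n G \<inter> Cs = K_G n G
            \<longrightarrow> I2 n G = I_G n G)"
proof -
  have "I2 n G \<subseteq> I_G n G" using assms by (rule I2_subset_I_G)
  moreover have "I_G n G \<subseteq> I2 n G"
    if "prime_ideal (I2 n G)" "I2 n G \<inter> Cx = {0}" "I2 n G \<inter> Cs = K_G n G"
    using that I0_subset_I2 by (intro I_G_subset_prime_ideal) auto
  ultimately show ?thesis by blast
qed

end
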